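(* Let $h\colon\mathbb{R}^d\to\mathbb{R}$ be a Lipschitz continuous convex function, let $\lambda>0$, and let $f(x)=h(x)+\frac{\lambda}{2}\|x\|^2$, with minimizer $x^*$ over $\mathbb{R}^d$ and minimum value $f^*$. Let $g_h(x;\xi)$ be a stochastic subgradient oracle for $h$, i.e. $\mathbb{E}_{\xi\sim D}\,g_h(x;\xi)\in\partial h(x)$, satisfying $\mathbb{E}_\xi\|g_h(x;\xi)\|^2\le L^2$ for all $x\in\mathbb{R}^d$. Consider the iteration $$x_{k+1}=x_k-\alpha_k\big(g_h(x_k;\xi_k)+\lambda x_k\big),\qquad \alpha_k=\frac{2}{\lambda(k+2)+\frac{36\lambda}{k+1}},$$ from $x_0\in\mathbb{R}^d$ with $\xi_k\sim D$ i.i.d. Then for every $T\ge0$, $$\mathbb{E}_{\xi_{0\dots T}}\left[f\left(\frac{2}{(T+1)(T+2)}\sum_{k=0}^T(k+1)x_k\right)-f^*\right]\le\frac{24L^2}{\lambda(T+2)}+\frac{36\lambda\|x_0-x^*\|^2}{(T+1)(T+2)}.$$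
   Context: $\partial h(x)=\{g: h(y)\ge h(x)+g^T(y-x)\ \forall y\in\mathbb{R}^d\}$; $\mathbb{E}_{\xi_{0\dots T}}$ denotes expectation over the i.i.d. samples $\xi_0,\dots,\xi_T$. *)

theory Defs
  imports "HOL-Analysis.Analysis" "HOL-Probability.Probability"
begin

definition subdifferential :: "('a::real_inner \<Rightarrow> real) \<Rightarrow> 'a \<Rightarrow> 'a set" where
  "subdifferential h x = {g. \<forall>y. h y \<ge> h x + inner g (y - x)}"

definition step_size :: "real \<Rightarrow> nat \<Rightarrow> real" where
  "step_size lam k = 2 / (lam * (real k + 2) + 36 * lam / (real k + 1))"

fun sgd_iter :: "('a::real_vector \<Rightarrow> 'b \<Rightarrow> 'a) \<Rightarrow> real \<Rightarrow> 'a \<Rightarrow> (nat \<Rightarrow> 'b) \<Rightarrow> nat \<Rightarrow> 'a" where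
  "sgd_iter g lam x0 xi 0 = x0"
| "sgd_iter g lam x0 xi (Suc k) =
     sgd_iter g lam x0 xi k - step_size lam k *\<^sub>R (g (sgd_iter g lam x0 xi k) (xi k) + lam *\<^sub>R sgd_iter g lam x0 xi k)"

end

theory Submission
  imports Defs
begin

text \<open>A second moment bounded by L^2 bounds every
  mean subgradient by L, so the optimality condition gives \<parallel>\<lambda> x*\<parallel> \<le> L, and one step of the method
  contracts the conditional mean of \<parallel>x_(k+1) - x*\<parallel>^2 by 1 - \<alpha>_k \<lambda>, paying with the gap f(x_k) - f*
  and adding at most 4 \<alpha>_k^2 L^2. The step size is tuned so that the potential
  Q_n = \<Sum>_(k<n) 2(k+1)(f(x_k) - f*) + \<lambda>(n^2+n+36)\<parallel>x_n - x*\<parallel>^2 grows in expectation by at most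
  16 L^2/\<lambda> per step. Hence E Q_(T+1) \<le> 36\<lambda>\<parallel>x_0 - x*\<parallel>^2 + 16(T+1)L^2/\<lambda>, and Jensen's inequality for the
  convex f at the (k+1)-weighted average of the iterates converts this into the claimed bound.\<close>

definition reg_obj :: "('a::real_normed_vector \<Rightarrow> real) \<Rightarrow> real \<Rightarrow> 'a \<Rightarrow> real" where
  "reg_obj h lam x = h x + lam / 2 * (norm x)\<^sup>2"

lemma norm_diff_scaleR_power2:
  fixes w v :: "'a::real_inner"
  shows "(norm (w - c *\<^sub>R v))\<^sup>2 = (norm w)\<^sup>2 - 2 * c * (w \<bullet> v) + c\<^sup>2 * (norm v)\<^sup>2"
  unfolding power2_norm_eq_inner
  by (simp add: inner_diff_left inner_diff_right inner_commute algebra_simps power2_eq_square)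

lemma norm_convex_combination_power2:
  fixes x y :: "'a::real_inner"
  shows "(norm ((1 - t) *\<^sub>R x + t *\<^sub>R y))\<^sup>2
           = (1 - t) * (norm x)\<^sup>2 + t * (norm y)\<^sup>2 - t * (1 - t) * (norm (x - y))\<^sup>2"
  unfolding power2_norm_eq_inner
  by (simp add: inner_add_left inner_add_right inner_diff_left inner_diff_right inner_commute
      algebra_simps power2_eq_square)

lemma convex_on_norm_power2: "convex_on UNIV (\<lambda>x::'a::real_inner. (norm x)\<^sup>2)"
proof (rule convex_onI)
  fix t :: real and x y :: 'a
  assume "0 < t" "t < 1"
  then have "0 \<le> t * (1 - t) * (norm (x - y))\<^sup>2" by simp
  then show "(norm ((1 - t) *\<^sub>R x + t *\<^sub>R y))\<^sup>2 \<le> (1 - t) * (norm x)\<^sup>2 + t * (norm y)\<^sup>2"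
    unfolding norm_convex_combination_power2 by linarith
qed simp

lemma convex_on_reg_obj:
  fixes h :: "'a::real_inner \<Rightarrow> real"
  assumes "convex_on UNIV h" and "lam \<ge> 0"
  shows "convex_on UNIV (reg_obj h lam)"
  unfolding reg_obj_def[abs_def] using assms convex_on_norm_power2
  by (intro convex_on_add convex_on_cmul) auto

lemma
  fixes G :: "'b \<Rightarrow> 'a::euclidean_space"
  assumes "prob_space D" and "integrable D G" and "integrable D (\<lambda>y. (norm (G y))\<^sup>2)"
  shows integrable_norm_diff_scaleR_power2: "integrable D (\<lambda>y. (norm (w - c *\<^sub>R G y))\<^sup>2)"
    and integral_norm_diff_scaleR_power2:
      "(\<integral>y. (norm (w - c *\<^sub>R G y))\<^sup>2 \<partial>D)
         = (norm w)\<^sup>2 - 2 * c * (w \<bullet> (\<integral>y. G y \<partial>D)) + c\<^sup>2 * (\<integral>y. (norm (G y))\<^sup>2 \<partial>D)"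
proof -
  interpret prob_space D by fact
  have inner_integrable: "integrable D (\<lambda>y. w \<bullet> G y)" using assms(2) by simp
  then show "integrable D (\<lambda>y. (norm (w - c *\<^sub>R G y))\<^sup>2)"
    unfolding norm_diff_scaleR_power2 using assms(3) by simp
  have "(\<integral>y. (norm (w - c *\<^sub>R G y))\<^sup>2 \<partial>D)
        = (norm w)\<^sup>2 - 2 * c * (\<integral>y. w \<bullet> G y \<partial>D) + c\<^sup>2 * (\<integral>y. (norm (G y))\<^sup>2 \<partial>D)"
    unfolding norm_diff_scaleR_power2 using inner_integrable assms(3) by (simp add: prob_space)
  also have "(\<integral>y. w \<bullet> G y \<partial>D) = w \<bullet> (\<integral>y. G y \<partial>D)" using assms(2) by simp
  finally show "(\<integral>y. (norm (w - c *\<^sub>R G y))\<^sup>2 \<partial>D)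
      = (norm w)\<^sup>2 - 2 * c * (w \<bullet> (\<integral>y. G y \<partial>D)) + c\<^sup>2 * (\<integral>y. (norm (G y))\<^sup>2 \<partial>D)" .
qed

lemma
  fixes G :: "'b \<Rightarrow> 'a::euclidean_space"
  assumes D: "prob_space D" and G_meas: "G \<in> borel_measurable D"
    and second_moment: "(\<integral>\<^sup>+ y. ennreal ((norm (G y))\<^sup>2) \<partial>D) \<le> ennreal (L\<^sup>2)"
  shows integrable_norm_power2_of_second_moment: "integrable D (\<lambda>y. (norm (G y))\<^sup>2)"
    and integrable_of_second_moment: "integrable D G"
    and integral_norm_power2_le_of_second_moment: "(\<integral>y. (norm (G y))\<^sup>2 \<partial>D) \<le> L\<^sup>2"
    and norm_integral_le_of_second_moment: "norm (\<integral>y. G y \<partial>D) \<le> \<bar>L\<bar>"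
proof -
  interpret prob_space D by (rule D)
  show sq_int: "integrable D (\<lambda>y. (norm (G y))\<^sup>2)"
    by (rule integrableI_bounded) (use G_meas second_moment in \<open>auto simp: le_less_trans\<close>)
  have "integrable D (\<lambda>y. norm (G y))"
    by (rule square_integrable_imp_integrable) (use G_meas sq_int in auto)
  then show G_int: "integrable D G" using G_meas integrable_norm_iff by blast
  have "ennreal (\<integral>y. (norm (G y))\<^sup>2 \<partial>D) = (\<integral>\<^sup>+ y. ennreal ((norm (G y))\<^sup>2) \<partial>D)"
    by (rule nn_integral_eq_integral[symmetric]) (use sq_int in auto)
  also note second_moment
  finally show sq_le: "(\<integral>y. (norm (G y))\<^sup>2 \<partial>D) \<le> L\<^sup>2"
    by (simp add: ennreal_le_iff)
  define m where "m = (\<integral>y. G y \<partial>D)"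
  \<comment> \<open>The variance identity: the second moment exceeds the squared norm of the mean.\<close>
  have "0 \<le> (\<integral>y. (norm (m - 1 *\<^sub>R G y))\<^sup>2 \<partial>D)" by simp
  also have "\<dots> = (\<integral>y. (norm (G y))\<^sup>2 \<partial>D) - (norm m)\<^sup>2"
    using integral_norm_diff_scaleR_power2[OF D G_int sq_int, of m 1]
    by (simp add: m_def power2_norm_eq_inner)
  finally have "(norm m)\<^sup>2 \<le> L\<^sup>2" using sq_le by simp
  then show "norm (\<integral>y. G y \<partial>D) \<le> \<bar>L\<bar>"
    unfolding m_def using abs_le_square_iff[of "norm m" L] by (simp add: m_def)
qed

text \<open>If \<lambda>\<parallel>u\<parallel> > M, then for q = M / (\<lambda>\<parallel>u\<parallel>) < 1 a subgradient at q u of norm at most M shows that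
  q u has a strictly smaller objective value than u.\<close>
lemma norm_scaleR_minimizer_le:
  fixes h :: "'a::real_inner \<Rightarrow> real"
  assumes bounded_subgradients: "\<And>x. \<exists>s \<in> subdifferential h x. norm s \<le> M"
    and minimizer: "\<And>y. reg_obj h lam u \<le> reg_obj h lam y" and lam: "lam > 0"
  shows "norm (lam *\<^sub>R u) \<le> M"
proof (rule ccontr)
  assume "\<not> norm (lam *\<^sub>R u) \<le> M"
  then have gt: "lam * norm u > M" using lam by simp
  have M0: "M \<ge> 0" using bounded_subgradients norm_ge_zero order_trans by blast
  have u0: "norm u > 0" using gt M0 by (cases "norm u = 0") auto
  define q where "q = M / (lam * norm u)"
  have q0: "0 \<le> q" and q1: "q < 1" using gt M0 lam u0 by (auto simp: q_def divide_simps)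
  have Mq: "M = q * lam * norm u" using lam u0 by (simp add: q_def)
  obtain s where s: "s \<in> subdifferential h (q *\<^sub>R u)" "norm s \<le> M"
    using bounded_subgradients by blast
  have "s \<bullet> u \<ge> - (M * norm u)"
    using Cauchy_Schwarz_ineq2[of s u] mult_right_mono[OF s(2) norm_ge_zero[of u]] by linarith
  then have "(1 - q) * (s \<bullet> u) \<ge> (1 - q) * (- (M * norm u))"
    using q1 by (intro mult_left_mono) auto
  moreover have "h u \<ge> h (q *\<^sub>R u) + (1 - q) * (s \<bullet> u)"
    using s(1) by (auto simp: subdifferential_def algebra_simps inner_diff_right)
  moreover have "h u + lam/2 * (norm u)\<^sup>2 \<le> h (q *\<^sub>R u) + lam/2 * (q\<^sup>2 * (norm u)\<^sup>2)"
    using minimizer[of "q *\<^sub>R u"] q0 by (simp add: reg_obj_def power_mult_distrib)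
  ultimately have "lam * (norm u)\<^sup>2 * (1/2) \<le> lam * (norm u)\<^sup>2 * (q - q\<^sup>2/2)"
    using Mq by (simp add: algebra_simps power2_eq_square)
  then have "1/2 \<le> q - q\<^sup>2/2" using lam u0 by (simp add: mult_le_cancel_left_pos)
  then have "(1 - q)\<^sup>2 \<le> 0" by (simp add: power2_eq_square algebra_simps)
  with q1 show False by simp
qed

lemma sgd_iter_cong:
  "(\<And>i. i < k \<Longrightarrow> xi i = xi' i) \<Longrightarrow> sgd_iter g lam x0 xi k = sgd_iter g lam x0 xi' k"
  by (induction k) auto

lemma measurable_sgd_iter:
  fixes g :: "'a::euclidean_space \<Rightarrow> 'b \<Rightarrow> 'a"
  assumes g_meas: "(\<lambda>(x, \<xi>). g x \<xi>) \<in> borel_measurable (borel \<Otimes>\<^sub>M D)" and "{..<k} \<subseteq> I"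
  shows "(\<lambda>xi. sgd_iter g lam x0 xi k) \<in> borel_measurable (PiM I (\<lambda>_. D))"
  using \<open>{..<k} \<subseteq> I\<close>
proof (induction k)
  case (Suc k)
  have "{..<k} \<subseteq> I" and "k \<in> I" using Suc.prems by auto
  with Suc.IH have IH: "(\<lambda>xi. sgd_iter g lam x0 xi k) \<in> borel_measurable (PiM I (\<lambda>_. D))"
    by blast
  with \<open>k \<in> I\<close> have "(\<lambda>xi. (sgd_iter g lam x0 xi k, xi k)) \<in> measurable (PiM I (\<lambda>_. D)) (borel \<Otimes>\<^sub>M D)"
    by measurable
  from measurable_compose[OF this g_meas] IH show ?case by simp
qed simp

text \<open>With e = x - u, the difference of the two sides is
  2\<alpha>(1 - \<alpha>\<lambda>)(s \<bullet> e - (h x - h u)) + \<alpha>^2 (4L^2 - E - \<parallel>\<lambda>u\<parallel>^2 - 2\<lambda> u \<bullet> s), a sum of two nonnegative terms.\<close>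
lemma sgd_step_sq_dist_le:
  fixes x u s :: "'a::real_inner"
  assumes subgrad: "h u \<ge> h x + s \<bullet> (u - x)"
    and s_le: "norm s \<le> \<bar>L\<bar>" and u_le: "norm (lam *\<^sub>R u) \<le> \<bar>L\<bar>" and E_le: "E \<le> L\<^sup>2"
    and \<alpha>: "0 \<le> \<alpha>" "\<alpha> * lam \<le> 1"
  shows "(norm ((1 - \<alpha> * lam) *\<^sub>R x - u))\<^sup>2 - 2 * \<alpha> * (((1 - \<alpha> * lam) *\<^sub>R x - u) \<bullet> s) + \<alpha>\<^sup>2 * E
     \<le> (1 - \<alpha> * lam) * (norm (x - u))\<^sup>2
        - 2 * \<alpha> * (1 - \<alpha> * lam) * (reg_obj h lam x - reg_obj h lam u) + 4 * \<alpha>\<^sup>2 * L\<^sup>2"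
proof -
  define e where "e = x - u"
  define \<beta> where "\<beta> = \<alpha> * lam"
  have x: "x = e + u" by (simp add: e_def)
  have "\<bar>(lam *\<^sub>R u) \<bullet> s\<bar> \<le> \<bar>L\<bar> * \<bar>L\<bar>"
    using Cauchy_Schwarz_ineq2[of "lam *\<^sub>R u" s] mult_mono[OF u_le s_le] by simp
  then have us: "\<bar>lam * (u \<bullet> s)\<bar> \<le> L\<^sup>2" by (simp add: power2_eq_square)
  have "(norm (lam *\<^sub>R u))\<^sup>2 \<le> \<bar>L\<bar>\<^sup>2" using u_le by (intro power_mono) auto
  then have uu: "lam\<^sup>2 * (u \<bullet> u) \<le> L\<^sup>2" by (simp add: power_mult_distrib power2_norm_eq_inner)
  have es: "e \<bullet> s \<ge> h x - h u"
    using subgrad by (simp add: e_def inner_diff_left inner_diff_right inner_commute)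
  have A: "0 \<le> 2 * \<alpha> * (1 - \<beta>) * (e \<bullet> s - (h x - h u))" using \<alpha> es by (simp add: \<beta>_def)
  have B: "0 \<le> \<alpha>\<^sup>2 * (4 * L\<^sup>2 - E - lam\<^sup>2 * (u \<bullet> u) - 2 * lam * (u \<bullet> s))"
    using us uu E_le by (intro mult_nonneg_nonneg) (auto simp: abs_le_iff)
  have "(1 - \<beta>) * (norm (x - u))\<^sup>2 - 2 * \<alpha> * (1 - \<beta>) * (reg_obj h lam x - reg_obj h lam u)
        + 4 * \<alpha>\<^sup>2 * L\<^sup>2
        - ((norm ((1 - \<beta>) *\<^sub>R x - u))\<^sup>2 - 2 * \<alpha> * (((1 - \<beta>) *\<^sub>R x - u) \<bullet> s) + \<alpha>\<^sup>2 * E)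
      = 2 * \<alpha> * (1 - \<beta>) * (e \<bullet> s - (h x - h u))
        + \<alpha>\<^sup>2 * (4 * L\<^sup>2 - E - lam\<^sup>2 * (u \<bullet> u) - 2 * lam * (u \<bullet> s))"
    unfolding x reg_obj_def power2_norm_eq_inner \<beta>_def
    by (simp add: inner_add_left inner_add_right inner_diff_left inner_diff_right inner_commute
        algebra_simps power2_eq_square)
  with A B show ?thesis unfolding \<beta>_def by linarith
qed

lemma
  fixes G :: "'b \<Rightarrow> 'a::euclidean_space"
  assumes D: "prob_space D" and G_meas: "G \<in> borel_measurable D"
    and second_moment: "(\<integral>\<^sup>+ y. ennreal ((norm (G y))\<^sup>2) \<partial>D) \<le> ennreal (L\<^sup>2)"
    and unbiased: "(\<integral>y. G y \<partial>D) \<in> subdifferential h x"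
    and u_le: "norm (lam *\<^sub>R u) \<le> \<bar>L\<bar>" and \<alpha>: "0 \<le> \<alpha>" "\<alpha> * lam \<le> 1"
  shows integrable_sgd_step_sq_dist:
      "integrable D (\<lambda>y. (norm (x - \<alpha> *\<^sub>R (G y + lam *\<^sub>R x) - u))\<^sup>2)"
    and integral_sgd_step_sq_dist_le:
      "(\<integral>y. (norm (x - \<alpha> *\<^sub>R (G y + lam *\<^sub>R x) - u))\<^sup>2 \<partial>D)
         \<le> (1 - \<alpha> * lam) * (norm (x - u))\<^sup>2
           - 2 * \<alpha> * (1 - \<alpha> * lam) * (reg_obj h lam x - reg_obj h lam u) + 4 * \<alpha>\<^sup>2 * L\<^sup>2"
proof -
  note G_int = integrable_of_second_moment[OF D G_meas second_moment]
    and sq_int = integrable_norm_power2_of_second_moment[OF D G_meas second_moment]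
  define w where "w = (1 - \<alpha> * lam) *\<^sub>R x - u"
  have step: "x - \<alpha> *\<^sub>R (G y + lam *\<^sub>R x) - u = w - \<alpha> *\<^sub>R G y" for y
    by (simp add: w_def algebra_simps)
  show "integrable D (\<lambda>y. (norm (x - \<alpha> *\<^sub>R (G y + lam *\<^sub>R x) - u))\<^sup>2)"
    unfolding step by (rule integrable_norm_diff_scaleR_power2[OF D G_int sq_int])
  have "(\<integral>y. (norm (x - \<alpha> *\<^sub>R (G y + lam *\<^sub>R x) - u))\<^sup>2 \<partial>D)
      = (norm w)\<^sup>2 - 2 * \<alpha> * (w \<bullet> (\<integral>y. G y \<partial>D)) + \<alpha>\<^sup>2 * (\<integral>y. (norm (G y))\<^sup>2 \<partial>D)"
    unfolding step by (rule integral_norm_diff_scaleR_power2[OF D G_int sq_int])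
  also have "\<dots> \<le> (1 - \<alpha> * lam) * (norm (x - u))\<^sup>2
           - 2 * \<alpha> * (1 - \<alpha> * lam) * (reg_obj h lam x - reg_obj h lam u) + 4 * \<alpha>\<^sup>2 * L\<^sup>2"
    unfolding w_def
  proof (rule sgd_step_sq_dist_le[OF _ _ u_le _ \<alpha>])
    show "h u \<ge> h x + (\<integral>y. G y \<partial>D) \<bullet> (u - x)"
      using unbiased by (simp add: subdifferential_def)
  qed (use norm_integral_le_of_second_moment[OF D G_meas second_moment]
      integral_norm_power2_le_of_second_moment[OF D G_meas second_moment] in auto)
  finally show "(\<integral>y. (norm (x - \<alpha> *\<^sub>R (G y + lam *\<^sub>R x) - u))\<^sup>2 \<partial>D)
      \<le> (1 - \<alpha> * lam) * (norm (x - u))\<^sup>2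
        - 2 * \<alpha> * (1 - \<alpha> * lam) * (reg_obj h lam x - reg_obj h lam u) + 4 * \<alpha>\<^sup>2 * L\<^sup>2" .
qed

lemma step_size_eq:
  assumes "lam > 0"
  shows "step_size lam n = 2 * (real n + 1) / (lam * ((real n + 1)\<^sup>2 + (real n + 1) + 36))"
  using assms by (simp add: step_size_def field_simps power2_eq_square)

lemma step_size_bounds:
  assumes lam_pos: "lam > 0"
  shows "0 \<le> step_size lam n" "step_size lam n * lam \<le> 1"
proof -
  have P: "2 * (real n + 1) \<le> (real n + 1)\<^sup>2 + (real n + 1) + 36"
    by (simp add: power2_eq_square algebra_simps)
  then show "0 \<le> step_size lam n" using lam_pos by (simp add: step_size_eq)
  show "step_size lam n * lam \<le> 1"
    using P lam_pos by (simp add: step_size_eq divide_le_eq_1 add_pos_nonneg)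
qed

text \<open>With P = (n+1)^2 + (n+1) + 36 and p = n^2 + n + 36 = P - 2(n+1) one has \<alpha>\<lambda>P = 2(n+1), and the
  claim follows from P \<le> 2p and (n+1)^2 \<le> P.\<close>
lemma potential_recursion_arith:
  fixes n :: nat
  assumes lam: "lam > 0" and F0: "0 \<le> F" and \<alpha>: "\<alpha> = step_size lam n"
    and I_le: "I \<le> (1 - \<alpha> * lam) * e - 2 * \<alpha> * (1 - \<alpha> * lam) * F + 4 * \<alpha>\<^sup>2 * L\<^sup>2"
  shows "2 * (real n + 1) * F + lam * ((real n + 1)\<^sup>2 + (real n + 1) + 36) * I
     \<le> lam * ((real n)\<^sup>2 + real n + 36) * e + 16 * L\<^sup>2 / lam"
proof -
  define K where "K = 2 * (real n + 1)"
  define P where "P = (real n + 1)\<^sup>2 + (real n + 1) + 36"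
  define p where "p = (real n)\<^sup>2 + real n + 36"
  have P0: "P > 0" by (simp add: P_def add_pos_nonneg)
  have P_eq: "P = p + K" by (simp add: P_def p_def K_def power2_eq_square algebra_simps)
  have \<alpha>_eq: "\<alpha> = K / (lam * P)" using \<alpha> step_size_eq[OF lam] by (simp add: K_def P_def)
  have "lam * P * I \<le> lam * P * ((1 - \<alpha> * lam) * e - 2 * \<alpha> * (1 - \<alpha> * lam) * F + 4 * \<alpha>\<^sup>2 * L\<^sup>2)"
    using lam P0 I_le by (intro mult_left_mono) auto
  also have "1 - \<alpha> * lam = p / P"
  proof -
    have "1 - \<alpha> * lam = (P - K) / P" using lam P0 by (simp add: \<alpha>_eq diff_divide_distrib)
    then show ?thesis by (simp add: P_eq)
  qed
  also have "lam * P * (p / P * e - 2 * \<alpha> * (p / P) * F + 4 * \<alpha>\<^sup>2 * L\<^sup>2)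
      = lam * p * e - (2 * K * p / P) * F + (4 * K\<^sup>2 / (lam * P)) * L\<^sup>2"
    unfolding \<alpha>_eq using lam P0 by (simp add: field_simps power2_eq_square)
  finally have recursion: "lam * P * I \<le> lam * p * e - (2 * K * p / P) * F + (4 * K\<^sup>2 / (lam * P)) * L\<^sup>2" .
  have "P \<le> 2 * p"
    using zero_le_power2[of "real n - 1/2"] by (simp add: P_eq p_def K_def power2_eq_square algebra_simps)
  moreover have "K \<ge> 0" by (simp add: K_def)
  ultimately have "K * P \<le> 2 * K * p" using mult_left_mono[of P "2 * p" K] by simp
  then have "K \<le> 2 * K * p / P" using P0 by (simp add: pos_le_divide_eq)
  then have F_term: "K * F \<le> (2 * K * p / P) * F" using F0 by (rule mult_right_mono)
  have "K\<^sup>2 \<le> 4 * P" by (simp add: K_def P_def power2_eq_square algebra_simps)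
  then have "4 * K\<^sup>2 / (lam * P) \<le> 16 / lam" using lam P0 by (simp add: field_simps)
  then have L_term: "(4 * K\<^sup>2 / (lam * P)) * L\<^sup>2 \<le> 16 * L\<^sup>2 / lam"
    using mult_right_mono[of _ _ "L\<^sup>2"] by fastforce
  show ?thesis using recursion F_term L_term unfolding K_def P_def p_def by linarith
qed

locale regularized_sgd =
  fixes h :: "'a::euclidean_space \<Rightarrow> real" and D :: "'b measure" and g :: "'a \<Rightarrow> 'b \<Rightarrow> 'a"
    and lam L :: real and u x0 :: 'a
  assumes D: "prob_space D"
    and g_meas: "(\<lambda>(x, \<xi>). g x \<xi>) \<in> borel_measurable (borel \<Otimes>\<^sub>M D)"
    and convex: "convex_on UNIV h"
    and unbiased: "\<And>x. (\<integral>\<xi>. g x \<xi> \<partial>D) \<in> subdifferential h x"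
    and second_moment: "\<And>x. (\<integral>\<^sup>+ \<xi>. ennreal ((norm (g x \<xi>))\<^sup>2) \<partial>D) \<le> ennreal (L\<^sup>2)"
    and lam_pos: "lam > 0"
    and minimizer: "\<And>y. reg_obj h lam u \<le> reg_obj h lam y"
begin

definition potential :: "nat \<Rightarrow> (nat \<Rightarrow> 'b) \<Rightarrow> real" where
  "potential n xi =
     (\<Sum>k<n. 2 * (real k + 1) * (reg_obj h lam (sgd_iter g lam x0 xi k) - reg_obj h lam u))
     + lam * ((real n)\<^sup>2 + real n + 36) * (norm (sgd_iter g lam x0 xi n - u))\<^sup>2"

lemma measurable_g_slice: "g x \<in> borel_measurable D"
proof -
  have "Pair x \<in> measurable D (borel \<Otimes>\<^sub>M D)" by simp
  from measurable_compose[OF this g_meas] show ?thesis by simp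
qed

lemma norm_scaleR_minimizer_le_L: "norm (lam *\<^sub>R u) \<le> \<bar>L\<bar>"
proof (rule norm_scaleR_minimizer_le[OF _ minimizer lam_pos])
  show "\<exists>s \<in> subdifferential h x. norm s \<le> \<bar>L\<bar>" for x
    using unbiased norm_integral_le_of_second_moment[OF D measurable_g_slice second_moment] by blast
qed

lemma reg_obj_gap_nonneg: "0 \<le> reg_obj h lam x - reg_obj h lam u"
  using minimizer[of x] by simp

lemma potential_nonneg: "0 \<le> potential n xi"
  unfolding potential_def using lam_pos reg_obj_gap_nonneg
  by (intro add_nonneg_nonneg mult_nonneg_nonneg sum_nonneg) auto

lemma potential_0: "potential 0 xi = 36 * lam * (norm (x0 - u))\<^sup>2"
  by (simp add: potential_def)

lemma measurable_potential:
  assumes "{..<n} \<subseteq> I"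
  shows "potential n \<in> borel_measurable (PiM I (\<lambda>_. D))"
proof -
  have h_meas: "h \<in> borel_measurable borel"
    using convex_on_continuous[OF open_UNIV convex] by (rule borel_measurable_continuous_onI)
  have "(\<lambda>xi. sgd_iter g lam x0 xi k) \<in> borel_measurable (PiM I (\<lambda>_. D))" if "k \<le> n" for k
    by (rule measurable_sgd_iter[OF g_meas]) (use assms that in auto)
  then show ?thesis
    unfolding potential_def[abs_def] reg_obj_def using h_meas by measurable
qed

lemma nn_integral_potential_Suc_le:
  "(\<integral>\<^sup>+ y. ennreal (potential (Suc n) (xi(n := y))) \<partial>D) \<le> ennreal (potential n xi + 16 * L\<^sup>2 / lam)"
proof -
  interpret prob_space D by (rule D)
  define x where "x = sgd_iter g lam x0 xi n"
  define \<alpha> where "\<alpha> = step_size lam n"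
  define F where "F = reg_obj h lam x - reg_obj h lam u"
  define S where "S = (\<Sum>k<n. 2 * (real k + 1) * (reg_obj h lam (sgd_iter g lam x0 xi k) - reg_obj h lam u))"
  define B where "B = lam * ((real n + 1)\<^sup>2 + (real n + 1) + 36)"
  define q where "q y = (norm (x - \<alpha> *\<^sub>R (g x y + lam *\<^sub>R x) - u))\<^sup>2" for y
  have past: "sgd_iter g lam x0 (xi(n := y)) k = sgd_iter g lam x0 xi k" if "k \<le> n" for k y
    by (rule sgd_iter_cong) (use that in auto)
  have "(\<Sum>k<Suc n. 2 * (real k + 1) * (reg_obj h lam (sgd_iter g lam x0 (xi(n := y)) k) - reg_obj h lam u))
      = S + 2 * (real n + 1) * F" for y
    unfolding S_def F_def x_def by (simp add: past)
  then have potential_upd: "potential (Suc n) (xi(n := y)) = S + 2 * (real n + 1) * F + B * q y" for y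
    unfolding potential_def B_def q_def x_def \<alpha>_def by (simp add: past)
  note step = integrable_sgd_step_sq_dist[OF D measurable_g_slice second_moment unbiased
      norm_scaleR_minimizer_le_L step_size_bounds[OF lam_pos, of n, folded \<alpha>_def]]
    integral_sgd_step_sq_dist_le[OF D measurable_g_slice second_moment unbiased
      norm_scaleR_minimizer_le_L step_size_bounds[OF lam_pos, of n, folded \<alpha>_def]]
  have "0 \<le> S + 2 * (real n + 1) * F"
    unfolding S_def F_def using reg_obj_gap_nonneg by (intro add_nonneg_nonneg sum_nonneg) auto
  moreover have "0 \<le> B" using lam_pos by (simp add: B_def add_nonneg_nonneg)
  ultimately have "(\<integral>\<^sup>+ y. ennreal (potential (Suc n) (xi(n := y))) \<partial>D)
      = ennreal (\<integral>y. S + 2 * (real n + 1) * F + B * q y \<partial>D)"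
    unfolding potential_upd using step(1) by (intro nn_integral_eq_integral) (auto simp: q_def)
  also have "(\<integral>y. S + 2 * (real n + 1) * F + B * q y \<partial>D) = S + 2 * (real n + 1) * F + B * (\<integral>y. q y \<partial>D)"
    using step(1) by (simp add: q_def prob_space)
  also have "\<dots> \<le> potential n xi + 16 * L\<^sup>2 / lam"
    using potential_recursion_arith[OF lam_pos reg_obj_gap_nonneg \<alpha>_def step(2)]
    unfolding potential_def S_def F_def B_def q_def x_def by simp
  finally show ?thesis using ennreal_leI by blast
qed

lemma nn_integral_potential_le:
  "(\<integral>\<^sup>+ xi. ennreal (potential n xi) \<partial>PiM {..<n} (\<lambda>_. D))
     \<le> ennreal (36 * lam * (norm (x0 - u))\<^sup>2 + real n * (16 * L\<^sup>2 / lam))"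
proof (induction n)
  case 0
  interpret prob_space "PiM {} (\<lambda>_. D)" by (rule prob_space_PiM) (use D in auto)
  show ?case by (simp add: potential_0 emeasure_space_1)
next
  case (Suc n)
  interpret product_sigma_finite "\<lambda>_. D"
    unfolding product_sigma_finite_def using D prob_space_imp_sigma_finite by auto
  interpret M: prob_space "PiM {..<n} (\<lambda>_. D)" by (rule prob_space_PiM) (use D in auto)
  define N where "N = 16 * L\<^sup>2 / lam"
  have N0: "0 \<le> N" using lam_pos by (simp add: N_def)
  have "(\<integral>\<^sup>+ xi. ennreal (potential (Suc n) xi) \<partial>PiM {..<Suc n} (\<lambda>_. D))
      = (\<integral>\<^sup>+ xi. (\<integral>\<^sup>+ y. ennreal (potential (Suc n) (xi(n := y))) \<partial>D) \<partial>PiM {..<n} (\<lambda>_. D))"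
  proof (unfold lessThan_Suc, rule product_nn_integral_insert)
    have "potential (Suc n) \<in> borel_measurable (PiM (insert n {..<n}) (\<lambda>_. D))"
      by (rule measurable_potential) auto
    then show "(\<lambda>xi. ennreal (potential (Suc n) xi)) \<in> borel_measurable (PiM (insert n {..<n}) (\<lambda>_. D))"
      by measurable
  qed auto
  also have "\<dots> \<le> (\<integral>\<^sup>+ xi. ennreal (potential n xi) + ennreal N \<partial>PiM {..<n} (\<lambda>_. D))"
    using nn_integral_potential_Suc_le potential_nonneg N0
    by (intro nn_integral_mono) (simp add: N_def ennreal_plus)
  also have "\<dots> = (\<integral>\<^sup>+ xi. ennreal (potential n xi) \<partial>PiM {..<n} (\<lambda>_. D)) + ennreal N"
    using measurable_potential[of n "{..<n}"] by (simp add: nn_integral_add M.emeasure_space_1)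
  also have "\<dots> \<le> ennreal (36 * lam * (norm (x0 - u))\<^sup>2 + real n * N) + ennreal N"
    using Suc.IH by (simp add: N_def add_right_mono)
  also have "\<dots> = ennreal (36 * lam * (norm (x0 - u))\<^sup>2 + real (Suc n) * N)"
    using N0 lam_pos by (subst ennreal_plus[symmetric]) (auto simp: algebra_simps)
  finally show ?case by (simp add: N_def)
qed

lemma reg_obj_average_le_potential:
  "reg_obj h lam ((2 / ((real T + 1) * (real T + 2))) *\<^sub>R (\<Sum>k\<le>T. (real k + 1) *\<^sub>R sgd_iter g lam x0 xi k))
     - reg_obj h lam u
   \<le> potential (Suc T) xi / ((real T + 1) * (real T + 2))"
proof -
  define W where "W = (real T + 1) * (real T + 2)"
  define w where "w k = 2 * (real k + 1) / W" for k
  have W0: "W > 0" by (simp add: W_def add_pos_nonneg)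
  have "(\<Sum>k\<le>T. w k) = 2 * (\<Sum>k\<le>T. real k + 1) / W"
    by (simp add: w_def sum_divide_distrib sum_distrib_left)
  also have "(\<Sum>k\<le>T. real k + 1) = W / 2"
    unfolding W_def by (induction T) (simp_all add: field_simps)
  finally have sum_w: "(\<Sum>k\<le>T. w k) = 1" using W0 by simp
  have "reg_obj h lam (\<Sum>k\<le>T. w k *\<^sub>R sgd_iter g lam x0 xi k)
      \<le> (\<Sum>k\<le>T. w k * reg_obj h lam (sgd_iter g lam x0 xi k))"
    using W0 by (intro convex_on_sum[OF _ _ convex_on_reg_obj[OF convex] sum_w]) (use lam_pos in \<open>auto simp: w_def\<close>)
  also have "\<dots> = (\<Sum>k\<le>T. w k * (reg_obj h lam (sgd_iter g lam x0 xi k) - reg_obj h lam u))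
      + reg_obj h lam u"
    using sum_w by (simp add: right_diff_distrib sum_subtractf flip: sum_distrib_right)
  also have "(\<Sum>k\<le>T. w k * (reg_obj h lam (sgd_iter g lam x0 xi k) - reg_obj h lam u))
      = (\<Sum>k<Suc T. 2 * (real k + 1) * (reg_obj h lam (sgd_iter g lam x0 xi k) - reg_obj h lam u)) / W"
    by (simp add: w_def lessThan_Suc_atMost sum_divide_distrib)
  finally have "reg_obj h lam (\<Sum>k\<le>T. w k *\<^sub>R sgd_iter g lam x0 xi k) - reg_obj h lam u
      \<le> (\<Sum>k<Suc T. 2 * (real k + 1) * (reg_obj h lam (sgd_iter g lam x0 xi k) - reg_obj h lam u)) / W"
    by simp
  also have "\<dots> \<le> potential (Suc T) xi / W"
    using W0 lam_pos by (intro divide_right_mono) (auto simp: potential_def)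
  finally show ?thesis
    by (simp add: W_def w_def scaleR_sum_right mult.commute)
qed

lemma nn_integral_average_gap_le:
  "(\<integral>\<^sup>+ xi. ennreal (reg_obj h lam ((2 / ((real T + 1) * (real T + 2))) *\<^sub>R
        (\<Sum>k\<le>T. (real k + 1) *\<^sub>R sgd_iter g lam x0 xi k)) - reg_obj h lam u) \<partial>PiM {..T} (\<lambda>_. D))
     \<le> ennreal (24 * L\<^sup>2 / (lam * (real T + 2))
                 + 36 * lam * (norm (x0 - u))\<^sup>2 / ((real T + 1) * (real T + 2)))"
  (is "?lhs \<le> ennreal ?bound")
proof -
  define W where "W = (real T + 1) * (real T + 2)"
  define B where "B = 36 * lam * (norm (x0 - u))\<^sup>2 + real (Suc T) * (16 * L\<^sup>2 / lam)"
  have W0: "W > 0" by (simp add: W_def add_pos_nonneg)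
  have B0: "B \<ge> 0" using lam_pos by (simp add: B_def)
  have "?lhs \<le> (\<integral>\<^sup>+ xi. ennreal (potential (Suc T) xi) / ennreal W \<partial>PiM {..<Suc T} (\<lambda>_. D))"
    unfolding lessThan_Suc_atMost using W0 potential_nonneg
    by (intro nn_integral_mono) (simp add: W_def divide_ennreal ennreal_leI reg_obj_average_le_potential)
  also have "\<dots> = (\<integral>\<^sup>+ xi. ennreal (potential (Suc T) xi) \<partial>PiM {..<Suc T} (\<lambda>_. D)) / ennreal W"
    using measurable_potential[OF order_refl, of "Suc T"] by (intro nn_integral_divide) measurable
  also have "\<dots> \<le> ennreal B / ennreal W"
    unfolding B_def by (intro divide_right_mono_ennreal nn_integral_potential_le)
  also have "\<dots> = ennreal (B / W)" using B0 W0 by (rule divide_ennreal)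
  also have "B / W \<le> ?bound"
  proof -
    have "real (Suc T) * (16 * L\<^sup>2 / lam) / W = 16 * L\<^sup>2 / (lam * (real T + 2))"
      by (simp add: W_def add.commute[of 1] divide_divide_eq_left mult.commute[of lam])
    moreover have "16 * L\<^sup>2 / (lam * (real T + 2)) \<le> 24 * L\<^sup>2 / (lam * (real T + 2))"
      using lam_pos by (simp add: divide_right_mono)
    ultimately show ?thesis by (simp add: B_def W_def add_divide_distrib)
  qed
  finally show ?thesis using ennreal_leI by blast
qed

end

theorem corollary2p5:
  fixes h :: "'a::euclidean_space \<Rightarrow> real"
    and D :: "'b measure"
    and g :: "'a \<Rightarrow> 'b \<Rightarrow> 'a"
    and lam L C fstar :: real
    and xstar x0 :: 'a
    and T :: nat
  assumes lip: "C-lipschitz_on UNIV h"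
    and cvx: "convex_on UNIV h"
    and lam_pos: "lam > 0"
    and xstar_min: "\<forall>y. h xstar + lam / 2 * (norm xstar)\<^sup>2 \<le> h y + lam / 2 * (norm y)\<^sup>2"
    and fstar_def: "fstar = h xstar + lam / 2 * (norm xstar)\<^sup>2"
    and D_prob: "prob_space D"
    and g_meas: "(\<lambda>(x, \<xi>). g x \<xi>) \<in> borel_measurable (borel \<Otimes>\<^sub>M D)"
    and g_unbiased: "\<forall>x. (\<integral>\<xi>. g x \<xi> \<partial>D) \<in> subdifferential h x"
    and g_second_moment: "\<forall>x. (\<integral>\<^sup>+ \<xi>. ennreal ((norm (g x \<xi>))\<^sup>2) \<partial>D) \<le> ennreal (L\<^sup>2)"
  shows "(\<integral>\<^sup>+ xi. ennreal (
            (let xbar = (2 / ((real T + 1) * (real T + 2))) *\<^sub>R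
                        (\<Sum>k\<le>T. (real k + 1) *\<^sub>R sgd_iter g lam x0 xi k)
             in h xbar + lam / 2 * (norm xbar)\<^sup>2) - fstar)
          \<partial>(PiM {..T} (\<lambda>_. D)))
         \<le> ennreal (24 * L\<^sup>2 / (lam * (real T + 2))
                    + 36 * lam * (norm (x0 - xstar))\<^sup>2 / ((real T + 1) * (real T + 2)))"
proof -
  interpret regularized_sgd h D g lam L xstar x0
    using D_prob g_meas cvx g_unbiased g_second_moment lam_pos xstar_min
    by (simp add: regularized_sgd_def reg_obj_def)
  have "(\<integral>\<^sup>+ xi. ennreal (
            (let xbar = (2 / ((real T + 1) * (real T + 2))) *\<^sub>R
                        (\<Sum>k\<le>T. (real k + 1) *\<^sub>R sgd_iter g lam x0 xi k)
             in h xbar + lam / 2 * (norm xbar)\<^sup>2) - fstar)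
          \<partial>(PiM {..T} (\<lambda>_. D)))
      = (\<integral>\<^sup>+ xi. ennreal (reg_obj h lam ((2 / ((real T + 1) * (real T + 2))) *\<^sub>R
            (\<Sum>k\<le>T. (real k + 1) *\<^sub>R sgd_iter g lam x0 xi k)) - reg_obj h lam xstar)
          \<partial>(PiM {..T} (\<lambda>_. D)))"
    by (simp add: Let_def reg_obj_def fstar_def)
  also note nn_integral_average_gap_le
  finally show ?thesis .
qed

end
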